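(* Let $N, D_1, D_2$ be positive integers. Let $f^{[n]}_{\mathrm{DINOv2}}$ ($n=1,\dots,N$) map images to $\mathbb{R}^{D_1}$ (patch features of a pretrained DINOv2 encoder), let $\mathrm{DiffEnc}^{[n]}$ ($n=1,\dots,N$) map images to $\mathbb{R}^{D_2}$ (the $n$-th patch token of a diffusion model's hidden representation at timestep $t=0$), and let $g_\phi:\mathbb{R}^{D_2}\to\mathbb{R}^{D_1}$ be a projection head. Assume all feature embeddings in the DINOv2 embedding space are $\ell_2$-normalized, i.e. $\|f^{[n]}_{\mathrm{DINOv2}}(u)\|_2 = 1$ and $\|g_\phi(\mathrm{DiffEnc}^{[n]}(u))\|_2=1$ for all images $u$ and all $n$. Let $x\sim p_X$ be a ground-truth image, $\hat x \sim p_{\hat X\mid Y}$ its reconstruction produced by any reconstruction method (with marginal law $p_{\hat X}$), and $\bar x\sim p_{\bar X}$ a proxy approximation of $x$, all random variables on a common probability space. Define $$\mathrm{REPA}(\bar x,\hat x)=\frac1N\sum_{n=1}^N \cos\!\Big(f^{[n]}_{\mathrm{DINOv2}}(\bar x),\, g_\phi\big(\mathrm{DiffEnc}^{[n]}(\hat x)\big)\Big),\qquad \mu_f(u)=\frac1N\sum_{n=1}^N f^{[n]}_{\mathrm{DINOv2}}(u),$$ $$\mathrm{ApproxErr}(x,\bar x)=\frac1N\sum_{n=1}^N\big\|f^{[n]}_{\mathrm{DINOv2}}(x)-f^{[n]}_{\mathrm{DINOv2}}(\bar x)\big\|_2^2,\qquad \mathrm{MisREPA}(u)=\frac1N\sum_{n=1}^N\big\|f^{[n]}_{\mathrm{DINOv2}}(u)-g_\phi\big(\mathrm{DiffEnc}^{[n]}(u)\big)\big\|_2^2,$$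 and $\mathrm{MMD}_{\mathrm{DINOv2}}(p_X,p_{\hat X})=\big\|\mathbb{E}_x[\mu_f(x)]-\mathbb{E}_{\hat x}[\mu_f(\hat x)]\big\|_2^2$. Then $$\mathbb{E}_{\hat x,\bar x}\big[\mathrm{REPA}(\bar x,\hat x)\big]\le 1-\frac18\,\mathrm{MMD}_{\mathrm{DINOv2}}(p_X,p_{\hat X})+\frac12\,\mathbb{E}_{x,\bar x}\big[\mathrm{ApproxErr}(x,\bar x)\big]+\frac14\,\mathbb{E}_{\hat x}\big[\mathrm{MisREPA}(\hat x)\big].$$
   Context: $\cos(a,b)=\langle a,b\rangle/(\|a\|_2\|b\|_2)$. Images are elements of a fixed Euclidean space; $f_{\mathrm{DINOv2}}$, $\mathrm{DiffEnc}$, $g_\phi$ are fixed measurable maps, and all expectations are assumed finite (they are, since all features considered are unit vectors or bounded). The expectations are taken under the joint law of $(x,\bar x,\hat x)$. *)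

theory Defs
  imports "HOL-Probability.Probability"
begin

definition cos_sim :: "'a::real_inner \<Rightarrow> 'a \<Rightarrow> real" where
  "cos_sim a b = inner a b / (norm a * norm b)"

definition REPA ::
  "nat \<Rightarrow> (nat \<Rightarrow> 'i \<Rightarrow> 'b::real_inner) \<Rightarrow> (nat \<Rightarrow> 'i \<Rightarrow> 'c) \<Rightarrow> ('c \<Rightarrow> 'b)
     \<Rightarrow> 'i \<Rightarrow> 'i \<Rightarrow> real" where
  "REPA N f enc g xbar xhat =
     (1 / real N) * (\<Sum>n=1..N. cos_sim (f n xbar) (g (enc n xhat)))"

definition mu_f :: "nat \<Rightarrow> (nat \<Rightarrow> 'i \<Rightarrow> 'b::real_vector) \<Rightarrow> 'i \<Rightarrow> 'b" where
  "mu_f N f u = (1 / real N) *\<^sub>R (\<Sum>n=1..N. f n u)"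

definition ApproxErr :: "nat \<Rightarrow> (nat \<Rightarrow> 'i \<Rightarrow> 'b::real_normed_vector) \<Rightarrow> 'i \<Rightarrow> 'i \<Rightarrow> real" where
  "ApproxErr N f x xbar = (1 / real N) * (\<Sum>n=1..N. (norm (f n x - f n xbar))\<^sup>2)"

definition MisREPA ::
  "nat \<Rightarrow> (nat \<Rightarrow> 'i \<Rightarrow> 'b::real_normed_vector) \<Rightarrow> (nat \<Rightarrow> 'i \<Rightarrow> 'c) \<Rightarrow> ('c \<Rightarrow> 'b) \<Rightarrow> 'i \<Rightarrow> real" where
  "MisREPA N f enc g u = (1 / real N) * (\<Sum>n=1..N. (norm (f n u - g (enc n u)))\<^sup>2)"

definition MMD_DINOv2 ::
  "'w measure \<Rightarrow> nat \<Rightarrow> (nat \<Rightarrow> 'i \<Rightarrow> 'b::euclidean_space) \<Rightarrow> ('w \<Rightarrow> 'i) \<Rightarrow> ('w \<Rightarrow> 'i) \<Rightarrow> real" where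
  "MMD_DINOv2 M N f X Xhat =
     (norm ((\<integral>\<omega>. mu_f N f (X \<omega>) \<partial>M) - (\<integral>\<omega>. mu_f N f (Xhat \<omega>) \<partial>M)))\<^sup>2"

end

theory Submission
  imports Defs
begin

text \<open>For unit vectors \<open>cos(a, b) = 1 - \<parallel>a - b\<parallel>\<^sup>2 / 2\<close>, so REPA is one minus half the mean
  squared patch distance \<open>\<parallel>f(xbar) - g(DiffEnc(xhat))\<parallel>\<^sup>2\<close>. The triangle inequality along
  \<open>f(x), f(xbar), g(DiffEnc(xhat)), f(xhat)\<close>, together with
  \<open>(a + b + c)\<^sup>2 \<le> 4a\<^sup>2 + 4b\<^sup>2 + 2c\<^sup>2\<close>, bounds \<open>\<parallel>f(x) - f(xhat)\<parallel>\<^sup>2\<close> by this distance, the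
  approximation error and the misalignment. After averaging over patches and taking expectations,
  Jensen's inequality bounds the MMD, the squared norm of an expectation of patch means, by the
  expected mean of \<open>\<parallel>f(x) - f(xhat)\<parallel>\<^sup>2\<close>.\<close>

lemma power2_sum3_le:
  fixes a b c :: real
  shows "(a + b + c)\<^sup>2 \<le> 4 * a\<^sup>2 + 4 * b\<^sup>2 + 2 * c\<^sup>2"
proof -
  have "4 * a\<^sup>2 + 4 * b\<^sup>2 + 2 * c\<^sup>2 - (a + b + c)\<^sup>2 = (a + b - c)\<^sup>2 + 2 * (a - b)\<^sup>2"
    by (simp add: power2_eq_square algebra_simps)
  then show ?thesis
    using zero_le_power2[of "a + b - c"] zero_le_power2[of "a - b"] by linarith
qed

lemma norm_diff_power2_le_three_steps:
  fixes a b c d :: "'a::real_normed_vector"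
  shows "(norm (a - d))\<^sup>2 \<le> 4 * (norm (a - b))\<^sup>2 + 4 * (norm (b - c))\<^sup>2 + 2 * (norm (c - d))\<^sup>2"
proof -
  have "a - d = (a - b) + (b - c) + (c - d)"
    by simp
  have "norm (a - d) \<le> norm (a - b) + norm (b - c) + norm (c - d)"
    unfolding \<open>a - d = (a - b) + (b - c) + (c - d)\<close>
    by (intro norm_triangle_le add_right_mono norm_triangle_ineq)
  then have "(norm (a - d))\<^sup>2 \<le> (norm (a - b) + norm (b - c) + norm (c - d))\<^sup>2"
    by (simp add: power_mono)
  then show ?thesis
    using power2_sum3_le order_trans by blast
qed

lemma cos_sim_unit:
  fixes a b :: "'a::real_inner"
  assumes "norm a = 1" "norm b = 1"
  shows "cos_sim a b = 1 - (norm (a - b))\<^sup>2 / 2"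
proof -
  have "a \<bullet> a = 1" "b \<bullet> b = 1"
    using assms by (metis power2_norm_eq_inner one_power2)+
  then show ?thesis
    using assms by (simp add: cos_sim_def power2_norm_eq_inner inner_diff_left inner_diff_right
        inner_commute field_simps)
qed

lemma abs_cos_sim_unit_le:
  fixes a b :: "'a::real_inner"
  assumes "norm a = 1" "norm b = 1"
  shows "\<bar>cos_sim a b\<bar> \<le> 1"
  using Cauchy_Schwarz_ineq2[of a b] assms by (simp add: cos_sim_def)

lemma power2_norm_diff_unit_le:
  fixes a b :: "'a::real_normed_vector"
  assumes "norm a = 1" "norm b = 1"
  shows "(norm (a - b))\<^sup>2 \<le> 4"
proof -
  have "norm (a - b) \<le> 2"
    using norm_triangle_ineq4[of a b] assms by simp
  then have "(norm (a - b))\<^sup>2 \<le> 2\<^sup>2"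
    by (intro power_mono) simp_all
  then show ?thesis
    by simp
qed

lemma abs_average_le:
  fixes h :: "'a \<Rightarrow> real"
  assumes "\<And>i. i \<in> A \<Longrightarrow> \<bar>h i\<bar> \<le> B" and "0 \<le> B"
  shows "\<bar>(1 / real (card A)) * (\<Sum>i\<in>A. h i)\<bar> \<le> B"
proof (cases "card A = 0")
  case False
  have "\<bar>\<Sum>i\<in>A. h i\<bar> \<le> (\<Sum>i\<in>A. B)"
    using sum_abs[of h A] sum_mono[of A "\<lambda>i. \<bar>h i\<bar>"] assms(1) by (meson order_trans)
  with False show ?thesis
    by (simp add: abs_mult field_simps)
qed (use assms(2) in simp)

lemma norm_average_power2_le:
  fixes v :: "'a \<Rightarrow> 'b::real_normed_vector"
  shows "(norm ((1 / real (card A)) *\<^sub>R (\<Sum>i\<in>A. v i)))\<^sup>2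
           \<le> (1 / real (card A)) * (\<Sum>i\<in>A. (norm (v i))\<^sup>2)"
proof (cases "card A = 0")
  case False
  then have card_pos: "real (card A) > 0" by simp
  have "(norm ((1 / real (card A)) *\<^sub>R (\<Sum>i\<in>A. v i)))\<^sup>2
          \<le> ((1 / real (card A)) * (\<Sum>i\<in>A. norm (v i)))\<^sup>2"
    using card_pos norm_sum[of v A] by (intro power_mono) (simp_all add: divide_right_mono)
  also have "\<dots> \<le> (1 / real (card A))\<^sup>2 * ((\<Sum>i\<in>A. (norm (v i))\<^sup>2) * real (card A))"
    unfolding power_mult_distrib
    using sum_squared_le_sum_of_squares[of "\<lambda>i. norm (v i)" A] by (intro mult_left_mono) auto
  also have "\<dots> = (1 / real (card A)) * (\<Sum>i\<in>A. (norm (v i))\<^sup>2)"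
    using card_pos by (simp add: power2_eq_square)
  finally show ?thesis .
next
  case True
  then show ?thesis
    by (simp only: True of_nat_0 div_by_0 scaleR_zero_left norm_zero) simp
qed

lemma (in prob_space) norm_integral_power2_le:
  fixes Z :: "'a \<Rightarrow> 'b::{banach, second_countable_topology}"
  assumes "Z \<in> borel_measurable M" and "integrable M (\<lambda>x. (norm (Z x))\<^sup>2)"
  shows "(norm (\<integral>x. Z x \<partial>M))\<^sup>2 \<le> (\<integral>x. (norm (Z x))\<^sup>2 \<partial>M)"
proof -
  have "integrable M (\<lambda>x. norm (Z x))"
    using square_integrable_imp_integrable[of "\<lambda>x. norm (Z x)"] assms by simp
  then have "(\<integral>x. norm (Z x) \<partial>M)\<^sup>2 \<le> (\<integral>x. (norm (Z x))\<^sup>2 \<partial>M)"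
    using variance_positive[of "\<lambda>x. norm (Z x)"] variance_eq[of "\<lambda>x. norm (Z x)"] assms(2)
    by linarith
  moreover have "(norm (\<integral>x. Z x \<partial>M))\<^sup>2 \<le> (\<integral>x. norm (Z x) \<partial>M)\<^sup>2"
    by (intro power_mono integral_norm_bound) simp
  ultimately show ?thesis
    by linarith
qed

locale unit_feature_model = prob_space M for M :: "'w measure" +
  fixes N :: nat
    and f :: "nat \<Rightarrow> 'i::euclidean_space \<Rightarrow> 'b::euclidean_space"
    and enc :: "nat \<Rightarrow> 'i \<Rightarrow> 'c::euclidean_space"
    and g :: "'c \<Rightarrow> 'b"
  assumes N_pos: "N \<ge> 1"
    and f_measurable: "\<And>n. n \<in> {1..N} \<Longrightarrow> f n \<in> borel_measurable borel"
    and enc_measurable: "\<And>n. n \<in> {1..N} \<Longrightarrow> enc n \<in> borel_measurable borel"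
    and g_measurable: "g \<in> borel_measurable borel"
    and norm_f: "\<And>n u. n \<in> {1..N} \<Longrightarrow> norm (f n u) = 1"
    and norm_g_enc: "\<And>n u. n \<in> {1..N} \<Longrightarrow> norm (g (enc n u)) = 1"
begin

lemma REPA_eq:
  "REPA N f enc g xb xh = 1 - (1/2) * ((1 / real N) * (\<Sum>n=1..N. (norm (f n xb - g (enc n xh)))\<^sup>2))"
proof -
  have "(\<Sum>n=1..N. cos_sim (f n xb) (g (enc n xh)))
          = (\<Sum>n=1..N. 1 - (norm (f n xb - g (enc n xh)))\<^sup>2 / 2)"
    by (rule sum.cong) (simp_all add: cos_sim_unit norm_f norm_g_enc)
  also have "\<dots> = real N - (\<Sum>n=1..N. (norm (f n xb - g (enc n xh)))\<^sup>2) / 2"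
    by (simp add: sum_subtractf sum_divide_distrib)
  finally show ?thesis
    using N_pos by (simp add: REPA_def field_simps)
qed

lemma norm_mu_f_diff_power2_le:
  "(norm (mu_f N f x - mu_f N f y))\<^sup>2 \<le> (1 / real N) * (\<Sum>n=1..N. (norm (f n x - f n y))\<^sup>2)"
  using norm_average_power2_le[of "{1..N}" "\<lambda>n. f n x - f n y"]
  by (simp add: mu_f_def sum_subtractf scaleR_diff_right)

lemma REPA_le:
  "REPA N f enc g xb xh \<le> 1 - (1/8) * (norm (mu_f N f x - mu_f N f xh))\<^sup>2
     + (1/2) * ApproxErr N f x xb + (1/4) * MisREPA N f enc g xh"
proof -
  let ?avg = "\<lambda>h. (1 / real N) * (\<Sum>n=1..N. h n)"
  have "(norm (mu_f N f x - mu_f N f xh))\<^sup>2 \<le> ?avg (\<lambda>n. (norm (f n x - f n xh))\<^sup>2)"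
    by (rule norm_mu_f_diff_power2_le)
  also have "\<dots> \<le> ?avg (\<lambda>n. 4 * (norm (f n x - f n xb))\<^sup>2 + 4 * (norm (f n xb - g (enc n xh)))\<^sup>2
                             + 2 * (norm (g (enc n xh) - f n xh))\<^sup>2)"
    by (intro mult_left_mono sum_mono norm_diff_power2_le_three_steps) simp
  also have "\<dots> = 4 * ApproxErr N f x xb + 4 * ?avg (\<lambda>n. (norm (f n xb - g (enc n xh)))\<^sup>2)
                   + 2 * MisREPA N f enc g xh"
    by (simp add: ApproxErr_def MisREPA_def sum.distrib sum_distrib_left norm_minus_commute
        algebra_simps)
  finally show ?thesis
    unfolding REPA_eq by simp
qed

lemma measurable_f_comp:
  assumes "n \<in> {1..N}" "Y \<in> borel_measurable M"
  shows "(\<lambda>w. f n (Y w)) \<in> borel_measurable M"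
  using measurable_compose[OF assms(2) f_measurable[OF assms(1)]] .

lemma measurable_g_enc_comp:
  assumes "n \<in> {1..N}" "Y \<in> borel_measurable M"
  shows "(\<lambda>w. g (enc n (Y w))) \<in> borel_measurable M"
  using measurable_compose[OF measurable_compose[OF assms(2) enc_measurable[OF assms(1)]] g_measurable] .

lemma norm_mu_f_le: "norm (mu_f N f u) \<le> 1"
proof -
  have "norm (\<Sum>n=1..N. f n u) \<le> real N"
    using norm_sum[of "\<lambda>n. f n u" "{1..N}"] by (simp add: norm_f)
  then show ?thesis
    using N_pos by (simp add: mu_f_def)
qed

lemma measurable_mu_f:
  "Y \<in> borel_measurable M \<Longrightarrow> (\<lambda>w. mu_f N f (Y w)) \<in> borel_measurable M"
  unfolding mu_f_def using measurable_f_comp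
  by (intro borel_measurable_scaleR borel_measurable_sum) auto

lemma integrable_mu_f:
  "Y \<in> borel_measurable M \<Longrightarrow> integrable M (\<lambda>w. mu_f N f (Y w))"
  by (rule integrable_const_bound[where B=1]) (simp_all add: norm_mu_f_le measurable_mu_f)

lemma integrable_norm_mu_f_diff_power2:
  assumes "X \<in> borel_measurable M" "Y \<in> borel_measurable M"
  shows "integrable M (\<lambda>w. (norm (mu_f N f (X w) - mu_f N f (Y w)))\<^sup>2)"
proof (rule integrable_const_bound[where B=4])
  have "norm (mu_f N f x - mu_f N f y) \<le> 2" for x y
    using norm_triangle_ineq4[of "mu_f N f x" "mu_f N f y"] norm_mu_f_le[of x] norm_mu_f_le[of y]
    by linarith
  then have "(norm (mu_f N f x - mu_f N f y))\<^sup>2 \<le> 2\<^sup>2" for x y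
    by (intro power_mono) simp_all
  then show "AE w in M. norm ((norm (mu_f N f (X w) - mu_f N f (Y w)))\<^sup>2) \<le> 4"
    by simp
qed (use assms measurable_mu_f in measurable)

lemma MMD_DINOv2_le:
  assumes "X \<in> borel_measurable M" "Xhat \<in> borel_measurable M"
  shows "MMD_DINOv2 M N f X Xhat \<le> (\<integral>w. (norm (mu_f N f (X w) - mu_f N f (Xhat w)))\<^sup>2 \<partial>M)"
proof -
  have "MMD_DINOv2 M N f X Xhat = (norm (\<integral>w. mu_f N f (X w) - mu_f N f (Xhat w) \<partial>M))\<^sup>2"
    unfolding MMD_DINOv2_def using assms by (simp add: integrable_mu_f)
  also have "\<dots> \<le> (\<integral>w. (norm (mu_f N f (X w) - mu_f N f (Xhat w)))\<^sup>2 \<partial>M)"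
    using assms measurable_mu_f
    by (intro norm_integral_power2_le integrable_norm_mu_f_diff_power2) auto
  finally show ?thesis .
qed

lemma abs_patch_average_le:
  "(\<And>n. n \<in> {1..N} \<Longrightarrow> \<bar>h n\<bar> \<le> B) \<Longrightarrow> 0 \<le> B \<Longrightarrow> \<bar>(1 / real N) * (\<Sum>n=1..N. h n)\<bar> \<le> B"
  using abs_average_le[of "{1..N}" h B] by simp

lemma integrable_REPA:
  assumes "Xbar \<in> borel_measurable M" "Xhat \<in> borel_measurable M"
  shows "integrable M (\<lambda>w. REPA N f enc g (Xbar w) (Xhat w))"
proof (rule integrable_const_bound[where B=1])
  show "AE w in M. norm (REPA N f enc g (Xbar w) (Xhat w)) \<le> 1"
    unfolding REPA_def real_norm_def
    by (intro AE_I2 abs_patch_average_le) (simp_all add: abs_cos_sim_unit_le norm_f norm_g_enc)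
  show "(\<lambda>w. REPA N f enc g (Xbar w) (Xhat w)) \<in> borel_measurable M"
    unfolding REPA_def cos_sim_def
    using measurable_f_comp[OF _ assms(1)] measurable_g_enc_comp[OF _ assms(2)]
    by (intro borel_measurable_times borel_measurable_const borel_measurable_sum) auto
qed

lemma integrable_ApproxErr:
  assumes "X \<in> borel_measurable M" "Xbar \<in> borel_measurable M"
  shows "integrable M (\<lambda>w. ApproxErr N f (X w) (Xbar w))"
proof (rule integrable_const_bound[where B=4])
  show "AE w in M. norm (ApproxErr N f (X w) (Xbar w)) \<le> 4"
    unfolding ApproxErr_def real_norm_def
    by (intro AE_I2 abs_patch_average_le) (simp_all add: power2_norm_diff_unit_le norm_f)
  show "(\<lambda>w. ApproxErr N f (X w) (Xbar w)) \<in> borel_measurable M"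
    unfolding ApproxErr_def
    using measurable_f_comp[OF _ assms(1)] measurable_f_comp[OF _ assms(2)]
    by (intro borel_measurable_times borel_measurable_const borel_measurable_sum) auto
qed

lemma integrable_MisREPA:
  assumes "Xhat \<in> borel_measurable M"
  shows "integrable M (\<lambda>w. MisREPA N f enc g (Xhat w))"
proof (rule integrable_const_bound[where B=4])
  show "AE w in M. norm (MisREPA N f enc g (Xhat w)) \<le> 4"
    unfolding MisREPA_def real_norm_def
    by (intro AE_I2 abs_patch_average_le) (simp_all add: power2_norm_diff_unit_le norm_f norm_g_enc)
  show "(\<lambda>w. MisREPA N f enc g (Xhat w)) \<in> borel_measurable M"
    unfolding MisREPA_def
    using measurable_f_comp[OF _ assms] measurable_g_enc_comp[OF _ assms]
    by (intro borel_measurable_times borel_measurable_const borel_measurable_sum) auto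
qed

end

theorem proposition1:
  fixes M :: "'w measure"
    and N :: nat
    and f :: "nat \<Rightarrow> 'i::euclidean_space \<Rightarrow> 'b::euclidean_space"
    and enc :: "nat \<Rightarrow> 'i \<Rightarrow> 'c::euclidean_space"
    and g :: "'c \<Rightarrow> 'b"
    and X Xbar Xhat :: "'w \<Rightarrow> 'i"
  assumes "prob_space M"
    and "N \<ge> 1"
    and "\<And>n. n \<in> {1..N} \<Longrightarrow> f n \<in> borel_measurable borel"
    and "\<And>n. n \<in> {1..N} \<Longrightarrow> enc n \<in> borel_measurable borel"
    and "g \<in> borel_measurable borel"
    and "X \<in> borel_measurable M"
    and "Xbar \<in> borel_measurable M"
    and "Xhat \<in> borel_measurable M"
    and "\<And>n u. n \<in> {1..N} \<Longrightarrow> norm (f n u) = 1"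
    and "\<And>n u. n \<in> {1..N} \<Longrightarrow> norm (g (enc n u)) = 1"
  shows "(\<integral>\<omega>. REPA N f enc g (Xbar \<omega>) (Xhat \<omega>) \<partial>M)
           \<le> 1 - (1/8) * MMD_DINOv2 M N f X Xhat
               + (1/2) * (\<integral>\<omega>. ApproxErr N f (X \<omega>) (Xbar \<omega>) \<partial>M)
               + (1/4) * (\<integral>\<omega>. MisREPA N f enc g (Xhat \<omega>) \<partial>M)"
proof -
  interpret unit_feature_model M N f enc g
    using assms by (intro unit_feature_model.intro unit_feature_model_axioms.intro) blast+
  let ?D = "\<lambda>\<omega>. (norm (mu_f N f (X \<omega>) - mu_f N f (Xhat \<omega>)))\<^sup>2"
  let ?A = "\<lambda>\<omega>. ApproxErr N f (X \<omega>) (Xbar \<omega>)"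
  let ?R = "\<lambda>\<omega>. MisREPA N f enc g (Xhat \<omega>)"
  have integrable: "integrable M ?D" "integrable M ?A" "integrable M ?R"
    using integrable_norm_mu_f_diff_power2 integrable_ApproxErr integrable_MisREPA assms(6-8)
    by blast+
  have "(\<integral>\<omega>. REPA N f enc g (Xbar \<omega>) (Xhat \<omega>) \<partial>M)
          \<le> (\<integral>\<omega>. 1 - (1/8) * ?D \<omega> + (1/2) * ?A \<omega> + (1/4) * ?R \<omega> \<partial>M)"
    using integrable_REPA[OF assms(7,8)] integrable REPA_le by (intro integral_mono) auto
  also have "\<dots> = 1 - (1/8) * (\<integral>\<omega>. ?D \<omega> \<partial>M) + (1/2) * (\<integral>\<omega>. ?A \<omega> \<partial>M) + (1/4) * (\<integral>\<omega>. ?R \<omega> \<partial>M)"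
    using integrable by (simp add: prob_space)
  also have "\<dots> \<le> 1 - (1/8) * MMD_DINOv2 M N f X Xhat + (1/2) * (\<integral>\<omega>. ?A \<omega> \<partial>M) + (1/4) * (\<integral>\<omega>. ?R \<omega> \<partial>M)"
    using MMD_DINOv2_le[OF assms(6,8)] by simp
  finally show ?thesis .
qed

end
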